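(* In the sleeping bandits problem described in the context, SB-EXP3 with $\eta_{q,t}=2\gamma_t=\sqrt{\frac{\ln(3K/\delta)}{\sum_{s=1}^t|\mathbb A_s|}}$ guarantees that, for any horizon $T$, with probability $1-\delta$, $$\max_{a\in[K]}\mathrm{Regret}(a)\le O\left(\sqrt{\ln(K/\delta)\sum_{t=1}^T|\mathbb A_t|}\right).$$
   Context: Sleeping bandits with $K$ arms: in each round $t=1,2,\dots,T$, an adaptive adversary reveals a nonempty set $\mathbb A_t\subseteq[K]$ of active arms and selects hidden losses $h_{i,t}\in[0,1]$; the learner pulls an active arm $i_t\in\mathbb A_t$ and observes only $h_{i_t,t}$. With $I_{i,t}=\mathbb 1\{i\in\mathbb A_t\}$, the per-action regret is $\mathrm{Regret}(a)=\sum_{t=1}^TI_{a,t}(h_{i_t,t}-h_{a,t})$. SB-EXP3: with IX-loss estimates $\tilde h_{i,s}=\frac{h_{i,s}\mathbb 1\{i_s=i\}}{q_{i,s}+\gamma_s}$, set $\tilde q_{i,1}=1$ and for $t\ge2$, $\tilde q_{i,t}=\exp\big(\eta_{q,t}\sum_{s=1}^{t-1}I_{i,s}(h_{i_s,s}-\tilde h_{i,s}-\gamma_s\sum_{j\in\mathbb A_s}\tilde h_{j,s})\big)$; play $i_t\sim q_t$ where $q_{i,t}=\frac{I_{i,t}\tilde q_{i,t}}{\sum_jI_{j,t}\tilde q_{j,t}}$. The rates $\eta_{q,t},\gamma_t$ are chosen after $\mathbb A_t$ is revealed. *)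

theory Defs
  imports "HOL-Probability.Probability"
begin

text \<open>A deterministic adaptive adversary is given by
  Adv t hist (active set at round t) and Loss t hist i (loss of arm i at round t),
  where hist is the list of arms pulled in rounds 1..t-1.
  A full history xs lists the pulls: xs ! (t-1) is the arm pulled in round t.\<close>

definition act :: "(nat \<Rightarrow> nat list \<Rightarrow> nat set) \<Rightarrow> nat \<Rightarrow> nat list \<Rightarrow> nat set" where
  "act Adv t xs = Adv t (take (t - 1) xs)"

definition lossv :: "(nat \<Rightarrow> nat list \<Rightarrow> nat \<Rightarrow> real) \<Rightarrow> nat \<Rightarrow> nat list \<Rightarrow> nat \<Rightarrow> real" where
  "lossv Loss t xs i = Loss t (take (t - 1) xs) i"

definition sb_eta :: "nat \<Rightarrow> real \<Rightarrow> (nat \<Rightarrow> nat list \<Rightarrow> nat set) \<Rightarrow> nat \<Rightarrow> nat list \<Rightarrow> real" where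
  "sb_eta K \<delta> Adv t xs =
     sqrt (ln (3 * real K / \<delta>) / (\<Sum>s = 1..t. real (card (act Adv s xs))))"

definition sb_gamma :: "nat \<Rightarrow> real \<Rightarrow> (nat \<Rightarrow> nat list \<Rightarrow> nat set) \<Rightarrow> nat \<Rightarrow> nat list \<Rightarrow> real" where
  "sb_gamma K \<delta> Adv t xs = sb_eta K \<delta> Adv t xs / 2"

text \<open>Sampling probabilities q_{i,t} given the cumulative exponent sums cum i
  = sum_{s<t} I_{i,s}(h_{i_s,s} - h~_{i,s} - gamma_s sum_{j in A_s} h~_{j,s}).\<close>
definition sb_qprob :: "nat \<Rightarrow> real \<Rightarrow> (nat \<Rightarrow> nat list \<Rightarrow> nat set) \<Rightarrow> (nat \<Rightarrow> real)
    \<Rightarrow> nat \<Rightarrow> nat list \<Rightarrow> nat \<Rightarrow> real" where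
  "sb_qprob K \<delta> Adv cum t xs i =
     (if i \<in> act Adv t xs then
        exp (sb_eta K \<delta> Adv t xs * cum i) /
          (\<Sum>j\<in>act Adv t xs. exp (sb_eta K \<delta> Adv t xs * cum j))
      else 0)"

primrec sb_cum :: "nat \<Rightarrow> real \<Rightarrow> (nat \<Rightarrow> nat list \<Rightarrow> nat set) \<Rightarrow> (nat \<Rightarrow> nat list \<Rightarrow> nat \<Rightarrow> real)
    \<Rightarrow> nat list \<Rightarrow> nat \<Rightarrow> nat \<Rightarrow> real" where
  "sb_cum K \<delta> Adv Loss xs 0 = (\<lambda>i. 0)"
| "sb_cum K \<delta> Adv Loss xs (Suc t) =
     (let s = Suc t;
          q = sb_qprob K \<delta> Adv (sb_cum K \<delta> Adv Loss xs t) s xs;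
          g = sb_gamma K \<delta> Adv s xs;
          hest = (\<lambda>j. lossv Loss s xs j * (if xs ! t = j then 1 else 0) / (q j + g))
      in (\<lambda>i. sb_cum K \<delta> Adv Loss xs t i +
               (if i \<in> act Adv s xs then
                  lossv Loss s xs (xs ! t) - hest i - g * (\<Sum>j\<in>act Adv s xs. hest j)
                else 0)))"

definition sb_q :: "nat \<Rightarrow> real \<Rightarrow> (nat \<Rightarrow> nat list \<Rightarrow> nat set) \<Rightarrow> (nat \<Rightarrow> nat list \<Rightarrow> nat \<Rightarrow> real)
    \<Rightarrow> nat \<Rightarrow> nat list \<Rightarrow> nat \<Rightarrow> real" where
  "sb_q K \<delta> Adv Loss t xs i = sb_qprob K \<delta> Adv (sb_cum K \<delta> Adv Loss xs (t - 1)) t xs i"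

definition sb_pmf :: "nat \<Rightarrow> real \<Rightarrow> (nat \<Rightarrow> nat list \<Rightarrow> nat set) \<Rightarrow> (nat \<Rightarrow> nat list \<Rightarrow> nat \<Rightarrow> real)
    \<Rightarrow> nat \<Rightarrow> nat list \<Rightarrow> nat pmf" where
  "sb_pmf K \<delta> Adv Loss t xs = embed_pmf (sb_q K \<delta> Adv Loss t xs)"

primrec sb_hist :: "nat \<Rightarrow> real \<Rightarrow> (nat \<Rightarrow> nat list \<Rightarrow> nat set) \<Rightarrow> (nat \<Rightarrow> nat list \<Rightarrow> nat \<Rightarrow> real)
    \<Rightarrow> nat \<Rightarrow> nat list pmf" where
  "sb_hist K \<delta> Adv Loss 0 = return_pmf []"
| "sb_hist K \<delta> Adv Loss (Suc t) =
     bind_pmf (sb_hist K \<delta> Adv Loss t)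
       (\<lambda>xs. map_pmf (\<lambda>i. xs @ [i]) (sb_pmf K \<delta> Adv Loss (Suc t) xs))"

definition regret :: "(nat \<Rightarrow> nat list \<Rightarrow> nat set) \<Rightarrow> (nat \<Rightarrow> nat list \<Rightarrow> nat \<Rightarrow> real)
    \<Rightarrow> nat \<Rightarrow> nat list \<Rightarrow> nat \<Rightarrow> real" where
  "regret Adv Loss T xs a =
     (\<Sum>t = 1..T. (if a \<in> act Adv t xs then lossv Loss t xs (xs ! (t - 1)) - lossv Loss t xs a else 0))"

end

theory Submission
  imports Defs
begin

text \<open>
  SB-EXP3 is exponential weights, restricted to the active arms, on the shifted losses
  \<open>h_{i_t,t} - h~_{i,t} - \<gamma>_t \<Sum>_j h~_{j,t}\<close>. The usual potential argument with the
  decreasing rates \<open>\<eta>_t\<close> bounds their cumulative sum for every arm \<open>a\<close> by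
  \<open>ln K / \<eta>_T + \<Sum>_t \<eta>_t (1 + \<Sum>_j h~_{j,t})\<close>, and \<open>Regret(a)\<close> is this sum plus the
  estimation error \<open>\<Sum>_t I_{a,t} (h~_{a,t} - h_{a,t})\<close> plus \<open>\<Sum>_t I_{a,t} \<gamma>_t \<Sum>_j h~_{j,t}\<close>.

  Both corrections are controlled by the implicit-exploration concentration inequality: for
  predictable weights \<open>0 \<le> w_{j,t} \<le> \<gamma>_t\<close>, \<open>exp (\<Sum>_t \<Sum>_j w_{j,t} (h~_{j,t} - h_{j,t}))\<close>
  is a supermartingale, so by Markov's inequality it exceeds \<open>ln (N / \<delta>)\<close> with probability
  at most \<open>\<delta> / N\<close>. We use \<open>N = 1 + K\<^sup>2\<close> weight families: \<open>\<gamma>_t\<close> on every arm, and for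
  every arm \<open>a\<close> and \<open>m \<in> {1..K}\<close> a constant weight on \<open>a\<close> tuned to the guess \<open>m T\<close> of the
  final load \<open>\<Sum>_t |A_t|\<close>; one guess is within a factor 2 of the true load. Together with
  \<open>\<Sum>_t |A_t| / sqrt (\<Sum>_{s\<le>t} |A_s|) \<le> 2 sqrt (\<Sum>_t |A_t|)\<close> this bounds the regret of all arms
  simultaneously by \<open>36 sqrt (ln (K / \<delta>) \<Sum>_t |A_t|)\<close>.
\<close>

lemma exp_le_one_plus_x_plus_sq:
  fixes y :: real
  assumes "y \<le> 1"
  shows "exp y \<le> 1 + y + y\<^sup>2"
proof (cases "0 \<le> y")
  case True
  then show ?thesis using exp_bound assms by blast
next
  case False
  define u where "u = - y"
  have u: "0 < u" using False u_def by simp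
  have "1 \<le> (1 - u + u\<^sup>2) * (1 + u + u\<^sup>2 / 2)"
  proof -
    have "(1 - u + u\<^sup>2) * (1 + u + u\<^sup>2 / 2) = 1 + u\<^sup>2 / 2 + u ^ 3 / 2 + u ^ 4 / 2"
      by (simp add: eval_nat_numeral field_simps)
    then show ?thesis using u by simp
  qed
  also have "\<dots> \<le> (1 - u + u\<^sup>2) * exp u"
  proof (rule mult_left_mono)
    show "1 + u + u\<^sup>2 / 2 \<le> exp u" using exp_lower_Taylor_quadratic[of u] u by simp
    have "1 - u + u\<^sup>2 = (u - 1 / 2)\<^sup>2 + 3 / 4" by (simp add: power2_eq_square field_simps)
    then show "0 \<le> 1 - u + u\<^sup>2" by simp
  qed
  finally have "exp (- u) \<le> 1 - u + u\<^sup>2"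
    by (simp add: exp_minus field_simps)
  then show ?thesis by (simp add: u_def)
qed

lemma div_one_plus_le_ln_one_plus:
  fixes z :: real
  assumes "0 \<le> z"
  shows "z / (1 + z) \<le> ln (1 + z)"
proof -
  have "ln (1 / (1 + z)) \<le> 1 / (1 + z) - 1"
    using assms by (intro ln_le_minus_one) simp
  then show ?thesis using assms by (simp add: ln_div field_simps)
qed

lemma sum_div_sqrt_partial_sums_le:
  fixes a :: "nat \<Rightarrow> real"
  assumes a: "\<And>s. 0 \<le> a s"
  shows "(\<Sum>s = 1..T. a s / sqrt (\<Sum>r = 1..s. a r)) \<le> 2 * sqrt (\<Sum>r = 1..T. a r)"
proof (induction T)
  case 0
  then show ?case by simp
next
  case (Suc T)
  define S where "S = (\<Sum>r = 1..T. a r)"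
  define S' where "S' = S + a (Suc T)"
  have S: "0 \<le> S" "S \<le> S'" using a by (simp_all add: S_def S'_def sum_nonneg)
  have "a (Suc T) / sqrt S' \<le> 2 * sqrt S' - 2 * sqrt S"
  proof (cases "S' = 0")
    case False
    then have pos: "0 < sqrt S'" using S by simp
    have "a (Suc T) = (sqrt S' - sqrt S) * (sqrt S' + sqrt S)"
      using S by (simp add: S'_def algebra_simps)
    also have "\<dots> \<le> (sqrt S' - sqrt S) * (2 * sqrt S')"
      using S by (intro mult_left_mono) auto
    finally have "a (Suc T) \<le> (2 * sqrt S' - 2 * sqrt S) * sqrt S'" by (simp add: algebra_simps)
    then show ?thesis using pos by (simp add: divide_le_eq)
  qed (use S in simp)
  then show ?case using Suc.IH by (simp add: S'_def S_def add.commute)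
qed

lemma grid_point_between:
  fixes S :: real and T K :: nat
  assumes "1 \<le> T" "real T \<le> S" "S \<le> real K * real T"
  shows "\<exists>m\<in>{1..K}. S \<le> real m * real T \<and> real m * real T \<le> 2 * S"
proof
  define m where "m = nat \<lceil>S / real T\<rceil>"
  have T: "0 < real T" using assms(1) by simp
  have "S / real T \<le> real m" "real m < S / real T + 1"
    using assms(2) T by (simp_all add: m_def) linarith
  then show "S \<le> real m * real T \<and> real m * real T \<le> 2 * S"
    using T assms(2) by (simp_all add: divide_le_eq field_simps)
  have "1 \<le> S / real T" "S / real T \<le> real K" using T assms(2,3) by (simp_all add: field_simps)
  then show "m \<in> {1..K}" by (auto simp: m_def le_nat_iff ceiling_le_iff)
qed

section \<open>One round of exponential weights with implicit exploration\<close>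

lemma implicit_exploration_step:
  fixes A :: "'a set" and q w l :: "'a \<Rightarrow> real" and g :: real
  assumes "finite A" and q_pos: "\<And>i. i \<in> A \<Longrightarrow> 0 < q i" and q_sum: "sum q A = 1"
    and w: "\<And>j. j \<in> A \<Longrightarrow> 0 \<le> w j \<and> w j \<le> g"
    and l: "\<And>j. j \<in> A \<Longrightarrow> 0 \<le> l j \<and> l j \<le> 1"
  shows "(\<Sum>i\<in>A. q i * exp (\<Sum>j\<in>A. w j * (l j * (if i = j then 1 else 0) / (q j + g) - l j))) \<le> 1"
proof -
  define W where "W = (\<Sum>j\<in>A. w j * l j)"
  have exponent: "(\<Sum>j\<in>A. w j * (l j * (if i = j then 1 else 0) / (q j + g) - l j))
      = w i * l i / (q i + g) - W" if "i \<in> A" for i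
  proof -
    have "(\<Sum>j\<in>A. w j * (l j * (if i = j then 1 else 0) / (q j + g)))
        = (\<Sum>j\<in>A. if j = i then w i * l i / (q i + g) else 0)"
      by (intro sum.cong) auto
    then show ?thesis using that \<open>finite A\<close>
      by (simp add: W_def right_diff_distrib sum_subtractf)
  qed
  \<comment> \<open>Since \<open>w i * l i \<le> g\<close>, the extra \<open>g\<close> in the denominator linearises the exponential.\<close>
  have term_le: "q i * exp (w i * l i / (q i + g)) \<le> q i + w i * l i" if i: "i \<in> A" for i
  proof -
    have qi: "0 < q i" using q_pos i .
    have wl: "0 \<le> w i * l i" "w i * l i \<le> g"
      using w[OF i] l[OF i] by (auto intro: order_trans[OF mult_left_le])
    define z where "z = w i * l i / q i"
    have z: "0 \<le> z" unfolding z_def using wl qi by simp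
    have "w i * l i / (q i + g) \<le> w i * l i / (q i + w i * l i)"
      using wl qi by (intro divide_left_mono) auto
    also have "\<dots> = z / (1 + z)" unfolding z_def using qi by (simp add: field_simps)
    also have "\<dots> \<le> ln (1 + z)" using z by (rule div_one_plus_le_ln_one_plus)
    finally have "exp (w i * l i / (q i + g)) \<le> 1 + z"
      using z by (simp add: ln_ge_iff)
    then show ?thesis using qi by (simp add: z_def field_simps)
  qed
  have "(\<Sum>i\<in>A. q i * exp (\<Sum>j\<in>A. w j * (l j * (if i = j then 1 else 0) / (q j + g) - l j)))
      = (\<Sum>i\<in>A. q i * exp (w i * l i / (q i + g) - W))"
    by (rule sum.cong) (simp_all only: exponent)
  also have "\<dots> = (\<Sum>i\<in>A. q i * exp (w i * l i / (q i + g))) * exp (- W)"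
    by (simp add: sum_distrib_right exp_diff exp_minus divide_inverse mult.assoc)
  also have "\<dots> \<le> (\<Sum>i\<in>A. q i + w i * l i) * exp (- W)"
    using term_le by (intro mult_right_mono sum_mono) auto
  also have "\<dots> = (1 + W) * exp (- W)" by (simp add: sum.distrib q_sum W_def)
  also have "\<dots> \<le> 1" using exp_ge_add_one_self[of W] by (simp add: exp_minus field_simps)
  finally show ?thesis .
qed

lemma sum_exp_le_one_plus_moments:
  fixes A :: "'a set" and q x :: "'a \<Rightarrow> real"
  assumes q_nonneg: "\<And>i. i \<in> A \<Longrightarrow> 0 \<le> q i" and q_sum: "sum q A = 1"
    and x: "\<And>i. i \<in> A \<Longrightarrow> x i \<le> 1" and "0 < e" "e \<le> 1"
  shows "(\<Sum>i\<in>A. q i * exp (e * x i))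
         \<le> 1 + e * (\<Sum>i\<in>A. q i * x i) + e\<^sup>2 * (\<Sum>i\<in>A. q i * (x i)\<^sup>2)"
proof -
  have "(\<Sum>i\<in>A. q i * exp (e * x i)) \<le> (\<Sum>i\<in>A. q i * (1 + e * x i + (e * x i)\<^sup>2))"
  proof (intro sum_mono mult_left_mono)
    fix i assume i: "i \<in> A"
    have "e * x i \<le> 1"
    proof (cases "0 \<le> x i")
      case True
      then show ?thesis using \<open>e \<le> 1\<close> x[OF i] by (simp add: mult_le_one)
    next
      case False
      then show ?thesis using \<open>0 < e\<close> mult_pos_neg[of e "x i"] by simp
    qed
    then show "exp (e * x i) \<le> 1 + e * x i + (e * x i)\<^sup>2" by (rule exp_le_one_plus_x_plus_sq)
  qed (use q_nonneg in auto)
  also have "\<dots> = 1 + e * (\<Sum>i\<in>A. q i * x i) + e\<^sup>2 * (\<Sum>i\<in>A. q i * (x i)\<^sup>2)"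
    by (simp add: sum.distrib sum_distrib_left q_sum algebra_simps power_mult_distrib)
  finally show ?thesis .
qed

lemma ix_shifted_loss_moments:
  fixes A :: "'a set" and q :: "'a \<Rightarrow> real"
  assumes "finite A" and k: "k \<in> A" and q_nonneg: "\<And>i. i \<in> A \<Longrightarrow> 0 \<le> q i"
    and q_sum: "sum q A = 1" and "0 < g" and l: "0 \<le> l" "l \<le> 1"
  defines "h \<equiv> l / (q k + g)"
  defines "x \<equiv> \<lambda>i. l - (if i = k then h else 0) - g * h"
  shows "\<And>i. x i \<le> 1" and "(\<Sum>i\<in>A. q i * x i) = 0" and "(\<Sum>i\<in>A. q i * (x i)\<^sup>2) \<le> 1 + h"
proof -
  have qk: "0 \<le> q k" "q k \<le> 1"
    using q_nonneg k member_le_sum[of k A q] \<open>finite A\<close> q_sum by auto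
  have "0 < q k + g" using qk \<open>0 < g\<close> by simp
  then have h_eq: "q k * h + g * h = l" and "0 \<le> h" using l
    by (simp_all add: h_def add_divide_distrib[symmetric] distrib_right[symmetric])
  then have h: "0 \<le> h" "g * h \<le> l" "0 \<le> g * h" using qk \<open>0 < g\<close> by auto
  show x_le: "x i \<le> 1" for i
  proof -
    have "x i \<le> l - g * h" using h(1) by (simp add: x_def)
    then show ?thesis using h(3) l by linarith
  qed
  have "q i * x i = q i * (l - g * h) - (if i = k then q k * h else 0)" for i
    by (simp add: x_def algebra_simps)
  then show "(\<Sum>i\<in>A. q i * x i) = 0"
    using \<open>finite A\<close> k h_eq by (simp add: sum_subtractf sum_distrib_right[symmetric] q_sum)
  have "(\<Sum>i\<in>A - {k}. q i * (x i)\<^sup>2) \<le> (\<Sum>i\<in>A - {k}. q i)"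
  proof (rule sum_mono)
    fix i assume i: "i \<in> A - {k}"
    have "0 \<le> x i" using i h(2) by (simp add: x_def)
    then show "q i * (x i)\<^sup>2 \<le> q i"
      using i q_nonneg x_le[of i] by (simp add: mult_left_le power_le_one)
  qed
  also have "\<dots> = 1 - q k" using \<open>finite A\<close> k q_sum by (simp add: sum_diff1)
  finally have others: "(\<Sum>i\<in>A - {k}. q i * (x i)\<^sup>2) \<le> 1 - q k" .
  have xk: "x k = - ((1 - q k) * h)" using h_eq by (simp add: x_def algebra_simps)
  have "q k * (x k)\<^sup>2 = (q k * h) * (1 - q k)\<^sup>2 * h"
    unfolding xk by (simp add: power2_eq_square algebra_simps)
  also have "\<dots> \<le> 1 * 1 * h"
    using qk l h h_eq by (intro mult_right_mono mult_mono) (auto simp: power_le_one)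
  finally have "q k * (x k)\<^sup>2 \<le> h" by simp
  then show "(\<Sum>i\<in>A. q i * (x i)\<^sup>2) \<le> 1 + h"
    using others qk \<open>finite A\<close> k by (simp add: sum.remove)
qed

lemma exp_weights_step_ix:
  fixes A :: "'a set" and q :: "'a \<Rightarrow> real"
  assumes "finite A" and k: "k \<in> A" and q_nonneg: "\<And>i. i \<in> A \<Longrightarrow> 0 \<le> q i"
    and q_sum: "sum q A = 1" and "0 < g" and l: "0 \<le> l" "l \<le> 1" and "0 < e"
  shows "(\<Sum>i\<in>A. q i * exp (e * (l - (if i = k then l / (q k + g) else 0) - g * (l / (q k + g)))))
         \<le> exp (e * (e * (1 + l / (q k + g))))"
proof -
  define h where "h = l / (q k + g)"
  define x where "x i = l - (if i = k then h else 0) - g * h" for i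
  note moments = ix_shifted_loss_moments[OF assms(1-7), folded h_def, folded x_def]
  have "0 \<le> h" using l k q_nonneg \<open>0 < g\<close> by (simp add: h_def)
  have "(\<Sum>i\<in>A. q i * exp (e * x i)) \<le> exp (e * (e * (1 + h)))"
  proof (cases "e \<le> 1")
    case True
    have "(\<Sum>i\<in>A. q i * exp (e * x i))
        \<le> 1 + e * (\<Sum>i\<in>A. q i * x i) + e\<^sup>2 * (\<Sum>i\<in>A. q i * (x i)\<^sup>2)"
      using q_nonneg q_sum moments(1) \<open>0 < e\<close> True by (intro sum_exp_le_one_plus_moments) auto
    also have "\<dots> \<le> 1 + e * (e * (1 + h))"
      using moments(2,3) \<open>0 < e\<close> by (simp add: power2_eq_square mult.assoc)
    also have "\<dots> \<le> exp (e * (e * (1 + h)))" by (rule exp_ge_add_one_self)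
    finally show ?thesis .
  next
    case False
    have "(\<Sum>i\<in>A. q i * exp (e * x i)) \<le> (\<Sum>i\<in>A. q i * exp e)"
      using q_nonneg moments(1) \<open>0 < e\<close> by (intro sum_mono mult_left_mono) auto
    also have "\<dots> = exp e" by (simp add: sum_distrib_right[symmetric] q_sum)
    also have "\<dots> \<le> exp (e * (e * (1 + h)))"
      using False \<open>0 \<le> h\<close> by (simp add: mult_le_cancel_left1 mult_le_cancel_left
          order_trans[OF _ mult_left_mono[of 1 "1 + h" e]])
    finally show ?thesis .
  qed
  then show ?thesis unfolding x_def h_def .
qed

section \<open>Exponential weights on sleeping arms with decreasing rates\<close>

lemma ln_sum_exp_rate_decrease:
  fixes I :: "'a set" and y :: "'a \<Rightarrow> real"
  assumes "finite I" "I \<noteq> {}" "0 < e'" "e' \<le> e"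
  shows "ln (\<Sum>i\<in>I. exp (e' * y i)) / e'
         \<le> ln (\<Sum>i\<in>I. exp (e * y i)) / e + ln (card I) * (1 / e' - 1 / e)"
proof -
  define n where "n = real (card I)"
  define P where "P = (\<Sum>i\<in>I. exp (e * y i))"
  define r where "r = e' / e"
  define m where "m = ln (P / n)"
  have n: "0 < n" using assms(1,2) by (simp add: n_def card_gt_0_iff)
  have P: "0 < P" using assms(1,2) by (simp add: P_def sum_pos)
  have r: "0 < r" "r \<le> 1" using assms(3,4) by (simp_all add: r_def)
  \<comment> \<open>Convexity of \<open>exp\<close> between \<open>0\<close> and \<open>e * y i - m\<close>; this is Jensen for \<open>t \<mapsto> t powr r\<close>.\<close>
  have "exp (e' * y i) \<le> exp (r * m) * ((1 - r) + r * n / P * exp (e * y i))" for i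
  proof -
    have "e' * y i = r * m + ((1 - r) * 0 + r * (e * y i - m))"
      using assms(3,4) by (simp add: r_def field_simps)
    then have "exp (e' * y i) = exp (r * m) * exp ((1 - r) * 0 + r * (e * y i - m))"
      by (simp add: exp_add[symmetric])
    also have "\<dots> \<le> exp (r * m) * ((1 - r) * exp 0 + r * exp (e * y i - m))"
      using convex_onD[OF exp_convex, of r 0 "e * y i - m"] r by simp
    finally show ?thesis using n P by (simp add: m_def exp_diff field_simps)
  qed
  then have "(\<Sum>i\<in>I. exp (e' * y i)) \<le> exp (r * m) * (\<Sum>i\<in>I. (1 - r) + r * n / P * exp (e * y i))"
    by (simp add: sum_mono sum_distrib_left)
  also have "(\<Sum>i\<in>I. (1 - r) + r * n / P * exp (e * y i)) = (1 - r) * n + r * n / P * P"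
    unfolding sum.distrib sum_distrib_left[symmetric] P_def n_def by simp
  also have "(1 - r) * n + r * n / P * P = n" using P by (simp add: algebra_simps)
  finally have "ln (\<Sum>i\<in>I. exp (e' * y i)) \<le> ln (exp (r * m) * n)"
    using assms(1,2) n by (simp add: sum_pos)
  also have "\<dots> = r * m + ln n" using n by (simp add: ln_mult)
  finally have "ln (\<Sum>i\<in>I. exp (e' * y i)) \<le> r * m + ln n" .
  then have "ln (\<Sum>i\<in>I. exp (e' * y i)) / e' \<le> (r * (ln P - ln n) + ln n) / e'"
    using assms(3) P n by (simp add: divide_right_mono m_def ln_div)
  also have "\<dots> = ln P / e + ln n * (1 / e' - 1 / e)"
    using assms(3,4) by (simp add: r_def field_simps)
  finally show ?thesis by (simp add: n_def P_def)
qed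

lemma ln_sum_exp_sleeping_update_le:
  fixes U A :: "'a set" and c x :: "'a \<Rightarrow> real"
  assumes "finite U" "A \<subseteq> U" "A \<noteq> {}" "0 < e" "0 \<le> B"
    and step: "(\<Sum>i\<in>A. exp (e * c i) / (\<Sum>j\<in>A. exp (e * c j)) * exp (e * x i)) \<le> exp (e * B)"
  shows "ln (\<Sum>i\<in>U. exp (e * (c i + (if i \<in> A then x i else 0)))) / e
         \<le> B + ln (\<Sum>i\<in>U. exp (e * c i)) / e"
proof -
  have "finite A" using assms(1,2) by (rule finite_subset[rotated])
  define W where "W = (\<Sum>j\<in>A. exp (e * c j))"
  have W: "0 < W" using \<open>finite A\<close> \<open>A \<noteq> {}\<close> by (simp add: W_def sum_pos)
  have "(\<Sum>i\<in>A. exp (e * (c i + x i))) = W * (\<Sum>i\<in>A. exp (e * c i) / W * exp (e * x i))"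
    using W by (simp add: sum_distrib_left distrib_left exp_add)
  also have "\<dots> \<le> W * exp (e * B)" using step W by (simp add: W_def)
  finally have active: "(\<Sum>i\<in>A. exp (e * (c i + x i))) \<le> exp (e * B) * W"
    by (simp add: mult.commute)
  have sleeping: "(\<Sum>i\<in>U - A. exp (e * c i)) \<le> exp (e * B) * (\<Sum>i\<in>U - A. exp (e * c i))"
    using mult_right_mono[of 1 "exp (e * B)" "\<Sum>i\<in>U - A. exp (e * c i)"] assms(4,5)
    by (simp add: sum_nonneg)
  have "(\<Sum>i\<in>U. exp (e * (c i + (if i \<in> A then x i else 0))))
      = (\<Sum>i\<in>U - A. exp (e * c i)) + (\<Sum>i\<in>A. exp (e * (c i + x i)))"
    unfolding sum.subset_diff[OF assms(2,1)] by (intro arg_cong2[where f = "(+)"] sum.cong) auto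
  also have "\<dots> \<le> exp (e * B) * ((\<Sum>i\<in>U - A. exp (e * c i)) + W)"
    using sleeping active by (simp add: distrib_left)
  also have "(\<Sum>i\<in>U - A. exp (e * c i)) + W = (\<Sum>i\<in>U. exp (e * c i))"
    unfolding W_def by (rule sum.subset_diff[OF assms(2,1), symmetric])
  finally have le: "(\<Sum>i\<in>U. exp (e * (c i + (if i \<in> A then x i else 0))))
      \<le> exp (e * B) * (\<Sum>i\<in>U. exp (e * c i))" .
  have "U \<noteq> {}" using assms(2,3) by blast
  then have pos: "0 < (\<Sum>i\<in>U. exp (e * c i))" "0 < (\<Sum>i\<in>U. exp (e * (c i + (if i \<in> A then x i else 0))))"
    using \<open>finite U\<close> by (simp_all add: sum_pos)
  have "ln (\<Sum>i\<in>U. exp (e * (c i + (if i \<in> A then x i else 0))))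
      \<le> ln (exp (e * B) * (\<Sum>i\<in>U. exp (e * c i)))"
    using le pos by simp
  also have "\<dots> = e * B + ln (\<Sum>i\<in>U. exp (e * c i))" using pos by (simp add: ln_mult)
  finally have "ln (\<Sum>i\<in>U. exp (e * (c i + (if i \<in> A then x i else 0)))) / e
      \<le> (e * B + ln (\<Sum>i\<in>U. exp (e * c i))) / e"
    using \<open>0 < e\<close> by (simp add: divide_right_mono)
  also have "\<dots> = B + ln (\<Sum>i\<in>U. exp (e * c i)) / e" using \<open>0 < e\<close> by (simp add: add_divide_distrib)
  finally show ?thesis .
qed

lemma sleeping_hedge_regret_bound:
  fixes U :: "'a set" and A :: "nat \<Rightarrow> 'a set" and \<eta> B :: "nat \<Rightarrow> real"
    and c x :: "nat \<Rightarrow> 'a \<Rightarrow> real"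
  assumes "finite U" and A: "\<And>t. A t \<subseteq> U" "\<And>t. A t \<noteq> {}"
    and \<eta>_pos: "\<And>t. 1 \<le> t \<Longrightarrow> 0 < \<eta> t" and \<eta>_mono: "\<And>t. 1 \<le> t \<Longrightarrow> \<eta> (Suc t) \<le> \<eta> t"
    and B: "\<And>t. 0 \<le> B t"
    and c_0: "\<And>i. c 0 i = 0"
    and c_Suc: "\<And>t i. c (Suc t) i = c t i + (if i \<in> A (Suc t) then x (Suc t) i else 0)"
    and step: "\<And>t. 1 \<le> t \<Longrightarrow> t \<le> T \<Longrightarrow>
      (\<Sum>i\<in>A t. exp (\<eta> t * c (t - 1) i) / (\<Sum>j\<in>A t. exp (\<eta> t * c (t - 1) j)) * exp (\<eta> t * x t i))
        \<le> exp (\<eta> t * B t)"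
    and "a \<in> U" "1 \<le> T"
  shows "c T a \<le> ln (card U) / \<eta> T + (\<Sum>t = 1..T. B t)"
proof -
  define \<Psi> where "\<Psi> t e = ln (\<Sum>i\<in>U. exp (e * c t i)) / e" for t e
  have potential_step: "\<Psi> (Suc t) (\<eta> (Suc t)) \<le> B (Suc t) + \<Psi> t (\<eta> (Suc t))" if "Suc t \<le> T" for t
    unfolding \<Psi>_def c_Suc using step[of "Suc t"] that \<eta>_pos B
    by (intro ln_sum_exp_sleeping_update_le \<open>finite U\<close> A) auto
  have rate_change: "\<Psi> t e' \<le> \<Psi> t e + ln (card U) * (1 / e' - 1 / e)" if "0 < e'" "e' \<le> e" for t e e'
    unfolding \<Psi>_def using \<open>finite U\<close> \<open>a \<in> U\<close> that by (intro ln_sum_exp_rate_decrease) auto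
  have induct: "\<Psi> t (\<eta> (Suc t)) \<le> ln (card U) / \<eta> (Suc t) + (\<Sum>s = 1..t. B s)" if "t < T" for t
    using that
  proof (induction t)
    case 0
    then show ?case by (simp add: \<Psi>_def c_0)
  next
    case (Suc t)
    have "\<Psi> (Suc t) (\<eta> (Suc (Suc t)))
        \<le> \<Psi> (Suc t) (\<eta> (Suc t)) + ln (card U) * (1 / \<eta> (Suc (Suc t)) - 1 / \<eta> (Suc t))"
      using \<eta>_pos \<eta>_mono by (intro rate_change) auto
    also have "\<dots> \<le> B (Suc t) + ln (card U) / \<eta> (Suc t) + (\<Sum>s = 1..t. B s)
        + ln (card U) * (1 / \<eta> (Suc (Suc t)) - 1 / \<eta> (Suc t))"
      using potential_step[of t] Suc by simp
    also have "\<dots> = ln (card U) / \<eta> (Suc (Suc t)) + (\<Sum>s = 1..Suc t. B s)"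
      by (simp add: algebra_simps)
    finally show ?case .
  qed
  obtain t where T: "T = Suc t" using \<open>1 \<le> T\<close> by (cases T) auto
  have "exp (\<eta> T * c T a) \<le> (\<Sum>i\<in>U. exp (\<eta> T * c T i))"
    using \<open>finite U\<close> \<open>a \<in> U\<close> by (intro member_le_sum) auto
  moreover have "0 < (\<Sum>i\<in>U. exp (\<eta> T * c T i))"
    using \<open>finite U\<close> \<open>a \<in> U\<close> by (intro sum_pos) auto
  ultimately have "c T a \<le> \<Psi> T (\<eta> T)"
    using \<eta>_pos[OF \<open>1 \<le> T\<close>] by (simp add: \<Psi>_def ln_ge_iff pos_le_divide_eq mult.commute)
  also have "\<dots> \<le> B T + \<Psi> t (\<eta> T)" using potential_step[of t] T by simp
  also have "\<dots> \<le> ln (card U) / \<eta> T + (\<Sum>s = 1..T. B s)" using induct[of t] T by simp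
  finally show ?thesis .
qed

section \<open>The history distribution of SB-EXP3\<close>

lemma measure_pmf_Markov_inequality:
  fixes M :: "'a pmf" and Z :: "'a \<Rightarrow> real"
  assumes Z: "\<And>x. 0 \<le> Z x" and "(\<integral>\<^sup>+x. ennreal (Z x) \<partial>measure_pmf M) \<le> 1" and "0 < c"
  shows "measure_pmf.prob M {x. c \<le> Z x} \<le> 1 / c"
proof -
  have "{x. c \<le> Z x} = {x\<in>space (measure_pmf M). 1 \<le> ennreal (1 / c) * ennreal (Z x)}"
    using Z \<open>0 < c\<close> by (auto simp: ennreal_mult[symmetric] le_divide_eq)
  then have "emeasure (measure_pmf M) {x. c \<le> Z x}
      \<le> ennreal (1 / c) * (\<integral>\<^sup>+x. ennreal (Z x) * indicator (space (measure_pmf M)) x \<partial>measure_pmf M)"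
    by (simp only:) (intro nn_integral_Markov_inequality, auto)
  also have "\<dots> \<le> ennreal (1 / c)"
    using mult_left_mono[OF assms(2), of "ennreal (1 / c)"] by simp
  finally show ?thesis using \<open>0 < c\<close> by (simp add: measure_pmf.emeasure_eq_measure)
qed

definition predictable :: "(nat \<Rightarrow> nat list \<Rightarrow> 'a) \<Rightarrow> bool" where
  "predictable f \<longleftrightarrow> (\<forall>t n xs. t - 1 \<le> n \<longrightarrow> f t (take n xs) = f t xs)"

lemma predictableD: "predictable f \<Longrightarrow> t - 1 \<le> n \<Longrightarrow> f t (take n xs) = f t xs"
  by (simp add: predictable_def)

lemma predictable_append:
  assumes "predictable f" "t \<le> Suc (length xs)"
  shows "f t (xs @ ys) = f t xs"
  using predictableD[OF assms(1), of t "length xs" "xs @ ys"] assms(2) by simp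

lemma predictable_act: "predictable (act Adv)"
  by (simp add: predictable_def act_def min_absorb1)

lemma predictable_lossv: "predictable (lossv Loss)"
  by (simp add: predictable_def lossv_def min_absorb1 fun_eq_iff)

lemma predictable_sb_eta: "predictable (sb_eta K \<delta> Adv)"
  unfolding predictable_def sb_eta_def
  using predictableD[OF predictable_act] by (auto intro!: arg_cong[where f = sqrt] sum.cong)

lemma predictable_sb_gamma: "predictable (sb_gamma K \<delta> Adv)"
  using predictableD[OF predictable_sb_eta] by (simp add: predictable_def sb_gamma_def)

lemma predictable_sb_qprob: "predictable (sb_qprob K \<delta> Adv cum)"
  using predictableD[OF predictable_sb_eta] predictableD[OF predictable_act]
  by (simp add: predictable_def sb_qprob_def fun_eq_iff)

lemma sb_cum_take: "t \<le> n \<Longrightarrow> sb_cum K \<delta> Adv Loss (take n xs) t = sb_cum K \<delta> Adv Loss xs t"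
proof (induction t)
  case (Suc t)
  then have "take n xs ! t = xs ! t" by simp
  then show ?case
    using Suc predictableD[OF predictable_act, of "Suc t" n] predictableD[OF predictable_lossv, of "Suc t" n]
      predictableD[OF predictable_sb_gamma, of "Suc t" n] predictableD[OF predictable_sb_qprob, of "Suc t" n]
    by (simp only: sb_cum.simps Let_def)
qed simp

lemma predictable_sb_q: "predictable (sb_q K \<delta> Adv Loss)"
  unfolding predictable_def sb_q_def
  by (metis predictableD[OF predictable_sb_qprob] sb_cum_take)

locale sleeping_bandit =
  fixes K :: nat and \<delta> :: real and Adv :: "nat \<Rightarrow> nat list \<Rightarrow> nat set"
    and Loss :: "nat \<Rightarrow> nat list \<Rightarrow> nat \<Rightarrow> real"
  assumes K: "1 \<le> K" and \<delta>: "0 < \<delta>" "\<delta> < 1"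
    and Adv: "\<And>t hs. Adv t hs \<noteq> {} \<and> Adv t hs \<subseteq> {1..K}"
    and Loss: "\<And>t hs i. 0 \<le> Loss t hs i \<and> Loss t hs i \<le> 1"
begin

abbreviation "\<eta> \<equiv> sb_eta K \<delta> Adv"
abbreviation "\<gamma> \<equiv> sb_gamma K \<delta> Adv"
abbreviation "q \<equiv> sb_q K \<delta> Adv Loss"
abbreviation "hist \<equiv> sb_hist K \<delta> Adv Loss"

lemma act_nonempty: "act Adv t xs \<noteq> {}"
  and act_subset: "act Adv t xs \<subseteq> {1..K}"
  and finite_act: "finite (act Adv t xs)"
  using Adv by (auto simp: act_def intro: finite_subset)

lemma card_act_ge_1: "1 \<le> card (act Adv t xs)"
  using act_nonempty finite_act by (simp add: Suc_le_eq card_gt_0_iff)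

lemma card_act_le_K: "card (act Adv t xs) \<le> K"
  using card_mono[OF _ act_subset] by simp

lemma lossv_nonneg: "0 \<le> lossv Loss t xs i"
  and lossv_le_1: "lossv Loss t xs i \<le> 1"
  using Loss by (auto simp: lossv_def)

lemma sb_q_nonneg: "0 \<le> q t xs i"
  by (auto simp: sb_q_def sb_qprob_def intro!: divide_nonneg_nonneg sum_nonneg)

lemma sb_q_pos: "i \<in> act Adv t xs \<Longrightarrow> 0 < q t xs i"
  using finite_act act_nonempty by (auto simp: sb_q_def sb_qprob_def intro!: divide_pos_pos sum_pos)

lemma sb_q_eq_0: "i \<notin> act Adv t xs \<Longrightarrow> q t xs i = 0"
  by (simp add: sb_q_def sb_qprob_def)

lemma sum_sb_q: "(\<Sum>i\<in>act Adv t xs. q t xs i) = 1"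
proof -
  have "0 < (\<Sum>j\<in>act Adv t xs. exp (\<eta> t xs * sb_cum K \<delta> Adv Loss xs (t - 1) j))"
    using finite_act act_nonempty by (intro sum_pos) auto
  then show ?thesis by (simp add: sb_q_def sb_qprob_def sum_divide_distrib[symmetric])
qed

lemma pmf_sb_pmf: "pmf (sb_pmf K \<delta> Adv Loss t xs) i = q t xs i"
  and set_pmf_sb_pmf: "set_pmf (sb_pmf K \<delta> Adv Loss t xs) = act Adv t xs"
proof -
  have "(\<integral>\<^sup>+i. ennreal (q t xs i) \<partial>count_space UNIV) = (\<Sum>i\<in>act Adv t xs. ennreal (q t xs i))"
    using finite_act sb_q_eq_0 by (intro nn_integral_count_space') auto
  also have "\<dots> = 1" using sum_sb_q sb_q_nonneg by (simp add: sum_ennreal)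
  finally have total: "(\<integral>\<^sup>+i. ennreal (q t xs i) \<partial>count_space UNIV) = 1" .
  show "pmf (sb_pmf K \<delta> Adv Loss t xs) i = q t xs i"
    unfolding sb_pmf_def using pmf_embed_pmf[OF sb_q_nonneg total] .
  show "set_pmf (sb_pmf K \<delta> Adv Loss t xs) = act Adv t xs"
    unfolding sb_pmf_def set_embed_pmf[OF sb_q_nonneg total]
    using sb_q_pos sb_q_eq_0 by force
qed

lemma set_pmf_sb_hist:
  assumes "xs \<in> set_pmf (hist T)"
  shows "length xs = T" and "\<And>t. t < T \<Longrightarrow> xs ! t \<in> act Adv (Suc t) xs"
proof -
  have "length xs = T \<and> (\<forall>t<T. xs ! t \<in> act Adv (Suc t) xs)"
    using assms
  proof (induction T arbitrary: xs)
    case (Suc T)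
    then obtain ys i where ys: "ys \<in> set_pmf (hist T)" and i: "i \<in> act Adv (Suc T) ys"
      and xs: "xs = ys @ [i]"
      by (auto simp: set_pmf_sb_pmf)
    have "length ys = T" "\<forall>t<T. ys ! t \<in> act Adv (Suc t) ys" using Suc.IH[OF ys] by auto
    moreover have "act Adv (Suc t) xs = act Adv (Suc t) ys" if "t \<le> T" for t
      using predictable_append[OF predictable_act] that \<open>length ys = T\<close> xs by simp
    ultimately show ?case using i xs by (auto simp: nth_append less_Suc_eq)
  qed simp
  then show "length xs = T" and "\<And>t. t < T \<Longrightarrow> xs ! t \<in> act Adv (Suc t) xs" by auto
qed

lemma pulled_arm_active:
  "xs \<in> set_pmf (hist T) \<Longrightarrow> 1 \<le> t \<Longrightarrow> t \<le> T \<Longrightarrow> xs ! (t - 1) \<in> act Adv t xs"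
  using set_pmf_sb_hist(2)[of xs T "t - 1"] by simp

lemma nn_integral_sb_hist_le_1:
  fixes Z :: "nat \<Rightarrow> nat list \<Rightarrow> real"
  assumes "Z 0 [] \<le> 1" and Z_nonneg: "\<And>t xs. 0 \<le> Z t xs"
    and supermartingale: "\<And>t xs. xs \<in> set_pmf (hist t) \<Longrightarrow>
      (\<Sum>i\<in>act Adv (Suc t) xs. q (Suc t) xs i * Z (Suc t) (xs @ [i])) \<le> Z t xs"
  shows "(\<integral>\<^sup>+xs. ennreal (Z T xs) \<partial>measure_pmf (hist T)) \<le> 1"
proof (induction T)
  case 0
  then show ?case using assms(1) by simp
next
  case (Suc T)
  have step: "(\<integral>\<^sup>+i. ennreal (Z (Suc T) (xs @ [i])) \<partial>measure_pmf (sb_pmf K \<delta> Adv Loss (Suc T) xs))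
      \<le> ennreal (Z T xs)" if "xs \<in> set_pmf (hist T)" for xs
  proof -
    have "(\<integral>\<^sup>+i. ennreal (Z (Suc T) (xs @ [i])) \<partial>measure_pmf (sb_pmf K \<delta> Adv Loss (Suc T) xs))
        = (\<Sum>i\<in>act Adv (Suc T) xs. ennreal (Z (Suc T) (xs @ [i])) * ennreal (q (Suc T) xs i))"
      using finite_act
      by (subst nn_integral_measure_pmf_support) (auto simp: set_pmf_sb_pmf pmf_sb_pmf)
    also have "\<dots> = ennreal (\<Sum>i\<in>act Adv (Suc T) xs. q (Suc T) xs i * Z (Suc T) (xs @ [i]))"
      using sb_q_nonneg Z_nonneg by (simp add: sum_ennreal ennreal_mult'[symmetric] mult.commute)
    also have "\<dots> \<le> ennreal (Z T xs)" using supermartingale[OF that] by (rule ennreal_leI)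
    finally show ?thesis .
  qed
  have "(\<integral>\<^sup>+xs. ennreal (Z (Suc T) xs) \<partial>measure_pmf (hist (Suc T)))
      = (\<integral>\<^sup>+xs. (\<integral>\<^sup>+i. ennreal (Z (Suc T) (xs @ [i])) \<partial>measure_pmf (sb_pmf K \<delta> Adv Loss (Suc T) xs))
           \<partial>measure_pmf (hist T))"
    by simp
  also have "\<dots> \<le> (\<integral>\<^sup>+xs. ennreal (Z T xs) \<partial>measure_pmf (hist T))"
    using step by (intro nn_integral_mono_AE) (simp add: AE_measure_pmf_iff)
  finally show ?case using Suc.IH by simp
qed

section \<open>Learning rates and implicit-exploration concentration\<close>

definition L :: real where
  "L = ln (3 * real K / \<delta>)"

definition load :: "nat \<Rightarrow> nat list \<Rightarrow> real" where
  "load t xs = (\<Sum>r = 1..t. real (card (act Adv r xs)))"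

lemma L_pos: "0 < L"
  using K \<delta> by (simp add: L_def ln_gt_zero_iff)

lemma load_ge: "real t \<le> load t xs"
  using sum_mono[of "{1..t}" "\<lambda>_. 1::real" "\<lambda>r. real (card (act Adv r xs))"] card_act_ge_1
  by (simp add: load_def)

lemma load_mono: "s \<le> t \<Longrightarrow> load s xs \<le> load t xs"
  unfolding load_def by (intro sum_mono2) auto

lemma load_le: "load t xs \<le> real K * real t"
  using sum_mono[of "{1..t}" "\<lambda>r. real (card (act Adv r xs))" "\<lambda>_. real K"] card_act_le_K
  by (simp add: load_def mult.commute)

lemma sb_eta_eq: "\<eta> t xs = sqrt (L / load t xs)"
  by (simp add: sb_eta_def L_def load_def)

lemma sb_eta_pos: "1 \<le> t \<Longrightarrow> 0 < \<eta> t xs"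
  using L_pos load_ge[of t xs] by (simp add: sb_eta_eq)

lemma sb_gamma_pos: "1 \<le> t \<Longrightarrow> 0 < \<gamma> t xs"
  using sb_eta_pos by (simp add: sb_gamma_def)

lemma sb_eta_nonneg: "0 \<le> \<eta> t xs"
  using L_pos load_ge[of t xs] by (simp add: sb_eta_eq)

lemma sb_gamma_nonneg: "0 \<le> \<gamma> t xs"
  using sb_eta_nonneg by (simp add: sb_gamma_def)

lemma sb_eta_antimono: "1 \<le> s \<Longrightarrow> s \<le> t \<Longrightarrow> \<eta> t xs \<le> \<eta> s xs"
  using L_pos load_ge[of s xs] load_mono[of s t xs]
  by (simp add: sb_eta_eq divide_left_mono)

definition ix_est :: "nat \<Rightarrow> nat list \<Rightarrow> nat \<Rightarrow> real" where
  "ix_est s xs j = lossv Loss s xs j * (if xs ! (s - 1) = j then 1 else 0) / (q s xs j + \<gamma> s xs)"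

definition ix_dev :: "(nat \<Rightarrow> nat list \<Rightarrow> nat \<Rightarrow> real) \<Rightarrow> nat \<Rightarrow> nat list \<Rightarrow> real" where
  "ix_dev w s xs = (\<Sum>j\<in>act Adv s xs. w s xs j * (ix_est s xs j - lossv Loss s xs j))"

lemma ix_est_nonneg: "0 \<le> ix_est s xs j"
  using lossv_nonneg sb_q_nonneg sb_gamma_nonneg by (simp add: ix_est_def)

lemma ix_est_append:
  assumes "s \<le> Suc (length xs)"
  shows "ix_est s (xs @ ys) j
    = lossv Loss s xs j * (if (xs @ ys) ! (s - 1) = j then 1 else 0) / (q s xs j + \<gamma> s xs)"
  using assms by (simp add: ix_est_def predictable_append predictable_lossv predictable_sb_q
      predictable_sb_gamma)

lemma ix_dev_append:
  assumes "predictable w" "1 \<le> s" "s \<le> length xs"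
  shows "ix_dev w s (xs @ ys) = ix_dev w s xs"
  using assms by (simp add: ix_dev_def ix_est_def nth_append predictable_append
      predictable_act predictable_lossv predictable_sb_q predictable_sb_gamma)

lemma nn_integral_exp_ix_dev_le_1:
  assumes "predictable w" and w: "\<And>s xs j. 0 \<le> w s xs j \<and> w s xs j \<le> \<gamma> s xs"
  shows "(\<integral>\<^sup>+xs. ennreal (exp (\<Sum>s = 1..T. ix_dev w s xs)) \<partial>measure_pmf (hist T)) \<le> 1"
proof (rule nn_integral_sb_hist_le_1)
  fix t xs
  assume "xs \<in> set_pmf (hist t)"
  then have len: "length xs = t" by (rule set_pmf_sb_hist)
  define A where "A = act Adv (Suc t) xs"
  have last_dev: "ix_dev w (Suc t) (xs @ [i])
      = (\<Sum>j\<in>A. w (Suc t) xs j * (lossv Loss (Suc t) xs j * (if i = j then 1 else 0)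
          / (q (Suc t) xs j + \<gamma> (Suc t) xs) - lossv Loss (Suc t) xs j))" for i
    using len \<open>predictable w\<close>
    by (simp add: A_def ix_dev_def ix_est_append nth_append predictable_append predictable_act
        predictable_lossv)
  have "(\<Sum>i\<in>A. q (Suc t) xs i * exp (\<Sum>s = 1..Suc t. ix_dev w s (xs @ [i])))
      = exp (\<Sum>s = 1..t. ix_dev w s xs) * (\<Sum>i\<in>A. q (Suc t) xs i * exp (ix_dev w (Suc t) (xs @ [i])))"
  proof -
    have "(\<Sum>s = 1..t. ix_dev w s (xs @ [i])) = (\<Sum>s = 1..t. ix_dev w s xs)" for i
      using len \<open>predictable w\<close> by (intro sum.cong) (auto simp: ix_dev_append)
    then show ?thesis by (simp add: exp_add sum_distrib_left mult_ac)
  qed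
  also have "\<dots> \<le> exp (\<Sum>s = 1..t. ix_dev w s xs) * 1"
    unfolding last_dev A_def
    using finite_act sb_q_pos sum_sb_q w lossv_nonneg lossv_le_1
    by (intro mult_left_mono implicit_exploration_step) auto
  finally show "(\<Sum>i\<in>act Adv (Suc t) xs. q (Suc t) xs i * exp (\<Sum>s = 1..Suc t. ix_dev w s (xs @ [i])))
      \<le> exp (\<Sum>s = 1..t. ix_dev w s xs)"
    by (simp add: A_def)
qed simp_all

lemma prob_ix_dev_ge:
  assumes "predictable w" "\<And>s xs j. 0 \<le> w s xs j \<and> w s xs j \<le> \<gamma> s xs" "0 < c"
  shows "measure_pmf.prob (hist T) {xs. ln c \<le> (\<Sum>s = 1..T. ix_dev w s xs)} \<le> 1 / c"
proof -
  have "{xs. ln c \<le> (\<Sum>s = 1..T. ix_dev w s xs)} = {xs. c \<le> exp (\<Sum>s = 1..T. ix_dev w s xs)}"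
    using \<open>0 < c\<close> by (metis exp_le_cancel_iff exp_ln)
  then show ?thesis
    using measure_pmf_Markov_inequality[OF _ nn_integral_exp_ix_dev_le_1[OF assms(1,2)] \<open>0 < c\<close>]
    by simp
qed

section \<open>Regret decomposition and the high-probability bound\<close>

definition ix_total :: "nat \<Rightarrow> nat list \<Rightarrow> real" where
  "ix_total s xs = (\<Sum>j\<in>act Adv s xs. ix_est s xs j)"

lemma ix_total_nonneg: "0 \<le> ix_total s xs"
  by (simp add: ix_total_def ix_est_nonneg sum_nonneg)

lemma sb_cum_eq_sum:
  "sb_cum K \<delta> Adv Loss xs t a = (\<Sum>s = 1..t. if a \<in> act Adv s xs
      then lossv Loss s xs (xs ! (s - 1)) - ix_est s xs a - \<gamma> s xs * ix_total s xs else 0)"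
  by (induction t) (simp_all add: Let_def ix_est_def ix_total_def sb_q_def)

lemma regret_decomposition:
  "regret Adv Loss T xs a = sb_cum K \<delta> Adv Loss xs T a
    + (\<Sum>s = 1..T. if a \<in> act Adv s xs then ix_est s xs a - lossv Loss s xs a else 0)
    + (\<Sum>s = 1..T. if a \<in> act Adv s xs then \<gamma> s xs * ix_total s xs else 0)"
  unfolding regret_def sb_cum_eq_sum sum.distrib[symmetric] by (intro sum.cong) auto

lemma sb_cum_le_hedge_bound:
  assumes xs: "xs \<in> set_pmf (hist T)" and "1 \<le> T" "a \<in> {1..K}"
  shows "sb_cum K \<delta> Adv Loss xs T a \<le> ln K / \<eta> T xs + (\<Sum>t = 1..T. \<eta> t xs * (1 + ix_total t xs))"
proof -
  have "sb_cum K \<delta> Adv Loss xs T a \<le> ln (card {1..K}) / \<eta> T xs + (\<Sum>t = 1..T. \<eta> t xs * (1 + ix_total t xs))"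
  proof (rule sleeping_hedge_regret_bound[where A = "\<lambda>t. act Adv t xs"
        and x = "\<lambda>t i. lossv Loss t xs (xs ! (t - 1)) - ix_est t xs i - \<gamma> t xs * ix_total t xs"])
    fix t assume t: "1 \<le> t" "t \<le> T"
    define k where "k = xs ! (t - 1)"
    define l where "l = lossv Loss t xs k"
    have k: "k \<in> act Adv t xs" using pulled_arm_active[OF xs t] by (simp add: k_def)
    have est: "ix_est t xs i = (if i = k then l / (q t xs k + \<gamma> t xs) else 0)" for i
      by (auto simp: ix_est_def k_def l_def)
    have total: "ix_total t xs = l / (q t xs k + \<gamma> t xs)"
      using k finite_act by (simp add: ix_total_def est)
    have weights: "exp (\<eta> t xs * sb_cum K \<delta> Adv Loss xs (t - 1) i)
        / (\<Sum>j\<in>act Adv t xs. exp (\<eta> t xs * sb_cum K \<delta> Adv Loss xs (t - 1) j)) = q t xs i"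
      if "i \<in> act Adv t xs" for i
      using that by (simp add: sb_q_def sb_qprob_def)
    have "(\<Sum>i\<in>act Adv t xs. exp (\<eta> t xs * sb_cum K \<delta> Adv Loss xs (t - 1) i)
          / (\<Sum>j\<in>act Adv t xs. exp (\<eta> t xs * sb_cum K \<delta> Adv Loss xs (t - 1) j))
          * exp (\<eta> t xs * (lossv Loss t xs (xs ! (t - 1)) - ix_est t xs i - \<gamma> t xs * ix_total t xs)))
        = (\<Sum>i\<in>act Adv t xs. q t xs i * exp (\<eta> t xs * (l - (if i = k then l / (q t xs k + \<gamma> t xs) else 0)
          - \<gamma> t xs * (l / (q t xs k + \<gamma> t xs)))))"
      by (rule sum.cong) (simp_all only: weights est total k_def[symmetric] l_def[symmetric])
    also have "\<dots> \<le> exp (\<eta> t xs * (\<eta> t xs * (1 + l / (q t xs k + \<gamma> t xs))))"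
      using k finite_act sb_q_nonneg sum_sb_q sb_gamma_pos sb_eta_pos t lossv_nonneg lossv_le_1
      by (intro exp_weights_step_ix) (auto simp: l_def)
    finally show "(\<Sum>i\<in>act Adv t xs. exp (\<eta> t xs * sb_cum K \<delta> Adv Loss xs (t - 1) i)
          / (\<Sum>j\<in>act Adv t xs. exp (\<eta> t xs * sb_cum K \<delta> Adv Loss xs (t - 1) j))
          * exp (\<eta> t xs * (lossv Loss t xs (xs ! (t - 1)) - ix_est t xs i - \<gamma> t xs * ix_total t xs)))
        \<le> exp (\<eta> t xs * (\<eta> t xs * (1 + ix_total t xs)))"
      by (simp only: total)
  qed (use assms finite_act act_subset act_nonempty sb_eta_pos sb_eta_antimono sb_eta_nonneg
      ix_total_nonneg in \<open>auto simp: Let_def ix_est_def ix_total_def sb_q_def\<close>)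
  then show ?thesis by simp
qed

lemma sum_eta_card_le: "(\<Sum>s = 1..T. \<eta> s xs * card (act Adv s xs)) \<le> 2 * sqrt (L * load T xs)"
proof -
  have "(\<Sum>s = 1..T. \<eta> s xs * card (act Adv s xs))
      = sqrt L * (\<Sum>s = 1..T. card (act Adv s xs) / sqrt (\<Sum>r = 1..s. real (card (act Adv r xs))))"
    by (simp add: sum_distrib_left sb_eta_eq load_def real_sqrt_divide)
  also have "\<dots> \<le> sqrt L * (2 * sqrt (load T xs))"
    unfolding load_def using L_pos by (intro mult_left_mono sum_div_sqrt_partial_sums_le) auto
  finally show ?thesis by (simp add: real_sqrt_mult)
qed

lemma ln_K_div_eta_le: "1 \<le> T \<Longrightarrow> ln K / \<eta> T xs \<le> sqrt (L * load T xs)"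
proof -
  assume "1 \<le> T"
  then have load: "0 < load T xs" using load_ge[of T xs] by simp
  have "ln K \<le> L" using K \<delta> by (simp add: L_def field_simps)
  then have "ln K / \<eta> T xs \<le> L / \<eta> T xs"
    using sb_eta_nonneg by (rule divide_right_mono)
  also have "L / \<eta> T xs = sqrt (L * load T xs)"
    using L_pos load by (simp add: sb_eta_eq real_sqrt_divide real_sqrt_mult field_simps)
  finally show ?thesis .
qed

text \<open>The weights of the concentration events: \<open>None\<close> puts weight \<open>\<gamma>\<close> on every arm and
  controls the total estimated loss; \<open>Some (a, m)\<close> puts a constant weight on arm \<open>a\<close>, tuned for
  the guess \<open>m * T\<close> of the final load, and controls the estimation error of \<open>a\<close>.\<close>
definition ix_weight :: "nat \<Rightarrow> (nat \<times> nat) option \<Rightarrow> nat \<Rightarrow> nat list \<Rightarrow> nat \<Rightarrow> real" where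
  "ix_weight T e s xs j = (case e of
      None \<Rightarrow> \<gamma> s xs
    | Some (a, m) \<Rightarrow> if j = a then min (sqrt (L / (real m * real T)) / 2) (\<gamma> s xs) else 0)"

lemma predictable_ix_weight: "predictable (ix_weight T e)"
  using predictableD[OF predictable_sb_gamma]
  by (auto simp: predictable_def ix_weight_def fun_eq_iff split: option.split)

lemma ix_weight_bounds: "0 \<le> ix_weight T e s xs j \<and> ix_weight T e s xs j \<le> \<gamma> s xs"
  using sb_gamma_nonneg L_pos by (auto simp: ix_weight_def split: option.split)

lemma sum_gamma_ix_total_le:
  assumes "(\<Sum>s = 1..T. ix_dev (ix_weight T None) s xs) \<le> \<Lambda>"
  shows "(\<Sum>s = 1..T. \<gamma> s xs * ix_total s xs) \<le> \<Lambda> + sqrt (L * load T xs)"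
proof -
  have "\<gamma> s xs * ix_total s xs \<le> ix_dev (ix_weight T None) s xs + \<eta> s xs * card (act Adv s xs) / 2"
    for s
  proof -
    have "(\<Sum>j\<in>act Adv s xs. lossv Loss s xs j) \<le> card (act Adv s xs)"
      using sum_mono[of _ "lossv Loss s xs" "\<lambda>_. 1"] lossv_le_1 by simp
    then have "\<gamma> s xs * (\<Sum>j\<in>act Adv s xs. lossv Loss s xs j) \<le> \<gamma> s xs * card (act Adv s xs)"
      using sb_gamma_nonneg by (rule mult_left_mono)
    then show ?thesis
      by (simp add: ix_dev_def ix_weight_def ix_total_def sb_gamma_def right_diff_distrib
          sum_subtractf sum_distrib_left)
  qed
  then have "(\<Sum>s = 1..T. \<gamma> s xs * ix_total s xs)
      \<le> (\<Sum>s = 1..T. ix_dev (ix_weight T None) s xs + \<eta> s xs * card (act Adv s xs) / 2)"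
    by (rule sum_mono)
  also have "\<dots> = (\<Sum>s = 1..T. ix_dev (ix_weight T None) s xs)
      + (\<Sum>s = 1..T. \<eta> s xs * card (act Adv s xs)) / 2"
    by (simp add: sum.distrib sum_divide_distrib)
  finally show ?thesis using assms sum_eta_card_le[of xs T] by simp
qed

lemma ix_dev_single_arm:
  "ix_dev (ix_weight T (Some (a, m))) s xs = (if a \<in> act Adv s xs
    then min (sqrt (L / (real m * real T)) / 2) (\<gamma> s xs) * (ix_est s xs a - lossv Loss s xs a) else 0)"
  using finite_act by (simp add: ix_dev_def ix_weight_def if_distrib[of "\<lambda>w. w * _"]
      cong: if_cong)

lemma sum_ix_error_le:
  assumes "1 \<le> T" and dev: "\<And>m. m \<in> {1..K} \<Longrightarrow> (\<Sum>s = 1..T. ix_dev (ix_weight T (Some (a, m))) s xs) \<le> \<Lambda>"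
    and "\<Lambda> \<le> 2 * L"
  shows "(\<Sum>s = 1..T. if a \<in> act Adv s xs then ix_est s xs a - lossv Loss s xs a else 0)
    \<le> 6 * sqrt (L * load T xs)"
proof -
  define S where "S = load T xs"
  define X where "X = (\<Sum>s = 1..T. if a \<in> act Adv s xs then ix_est s xs a - lossv Loss s xs a else 0)"
  have S: "real T \<le> S" "0 < S" using load_ge[of T xs] \<open>1 \<le> T\<close> by (simp_all add: S_def)
  have "S \<le> real K * real T" using load_le by (simp add: S_def)
  then obtain m where m: "m \<in> {1..K}" "S \<le> real m * real T" "real m * real T \<le> 2 * S"
    using grid_point_between[OF \<open>1 \<le> T\<close> S(1)] by blast
  define c where "c = sqrt (L / (real m * real T)) / 2"
  have c: "0 < c" using L_pos m(1) \<open>1 \<le> T\<close> by (simp add: c_def)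
  have c_le: "c \<le> \<gamma> s xs" if "s \<in> {1..T}" for s
  proof -
    have "c \<le> sqrt (L / S) / 2" using L_pos S m(2) by (simp add: c_def divide_left_mono)
    also have "\<dots> = \<gamma> T xs" by (simp add: S_def sb_gamma_def sb_eta_eq)
    also have "\<dots> \<le> \<gamma> s xs" using that sb_eta_antimono[of s T xs] by (simp add: sb_gamma_def)
    finally show ?thesis .
  qed
  have "(\<Sum>s = 1..T. ix_dev (ix_weight T (Some (a, m))) s xs) = c * X"
    unfolding X_def sum_distrib_left using c_le
    by (intro sum.cong) (auto simp: ix_dev_single_arm c_def[symmetric] min_absorb1)
  then have "c * X \<le> 2 * L" using dev[OF m(1)] \<open>\<Lambda> \<le> 2 * L\<close> by simp
  \<comment> \<open>The guess \<open>m * T\<close> is within a factor 2 of \<open>S\<close>, so \<open>c\<close> is within a constant of \<open>sqrt (L / S)\<close>.\<close>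
  also have "2 * L \<le> c * (6 * sqrt (L * S))"
  proof -
    have mT: "0 < real m * real T" using m(2) S(2) by linarith
    have "4 * (real m * real T) \<le> 9 * S" using m(3) S(2) by linarith
    then have "L\<^sup>2 * (4 * (real m * real T)) \<le> L\<^sup>2 * (9 * S)" by (simp add: mult_left_mono)
    then have "(2 * L)\<^sup>2 \<le> 9 * L\<^sup>2 * S / (real m * real T)"
      using mT S L_pos by (simp add: le_divide_eq power2_eq_square)
    also have "\<dots> = (c * (6 * sqrt (L * S)))\<^sup>2"
      using L_pos S mT by (simp add: c_def power_mult_distrib power_divide) (simp add: power2_eq_square)
    finally have "(2 * L)\<^sup>2 \<le> (c * (6 * sqrt (L * S)))\<^sup>2" .
    moreover have "0 \<le> c * (6 * sqrt (L * S))" using c L_pos S by simp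
    ultimately show ?thesis by (rule power2_le_imp_le)
  qed
  finally have "c * X \<le> c * (6 * sqrt (L * S))" .
  then show ?thesis using c by (simp only: X_def S_def mult_le_cancel_left_pos)
qed

lemma regret_le_load: "regret Adv Loss T xs a \<le> load T xs"
  unfolding regret_def load_def
proof (intro sum_mono)
  fix t
  have "1 \<le> real (card (act Adv t xs))" using card_act_ge_1 by simp
  then show "(if a \<in> act Adv t xs then lossv Loss t xs (xs ! (t - 1)) - lossv Loss t xs a else 0)
      \<le> real (card (act Adv t xs))"
    using lossv_nonneg[of t xs a] lossv_le_1[of t xs "xs ! (t - 1)"] by auto
qed

lemma regret_le_on_good_event:
  assumes xs: "xs \<in> set_pmf (hist T)" and a: "a \<in> {1..K}" and "\<Lambda> \<le> 2 * L"
    and dev_all: "(\<Sum>s = 1..T. ix_dev (ix_weight T None) s xs) \<le> \<Lambda>"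
    and dev_arm: "\<And>m. m \<in> {1..K} \<Longrightarrow> (\<Sum>s = 1..T. ix_dev (ix_weight T (Some (a, m))) s xs) \<le> \<Lambda>"
  shows "regret Adv Loss T xs a \<le> 18 * sqrt (L * load T xs)"
proof (cases "load T xs \<le> L")
  case True
  have "load T xs \<le> sqrt (L * load T xs)"
    using True load_ge[of T xs] by (intro real_le_rsqrt) (simp add: power2_eq_square mult_right_mono)
  moreover have "0 \<le> sqrt (L * load T xs)" using L_pos load_ge[of T xs] by simp
  ultimately show ?thesis using regret_le_load[of T xs a] by linarith
next
  case False
  define Sq where "Sq = sqrt (L * load T xs)"
  have T: "1 \<le> T"
  proof (rule ccontr)
    assume "\<not> 1 \<le> T"
    then show False using False L_pos by (simp add: load_def)
  qed
  have L_le: "L \<le> Sq"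
    using False L_pos real_sqrt_le_mono[of "L * L" "L * load T xs"] by (simp add: Sq_def)
  have "(\<Sum>s = 1..T. \<eta> s xs) \<le> (\<Sum>s = 1..T. \<eta> s xs * card (act Adv s xs))"
  proof (rule sum_mono)
    fix s
    show "\<eta> s xs \<le> \<eta> s xs * card (act Adv s xs)"
      using mult_left_mono[of 1 "real (card (act Adv s xs))" "\<eta> s xs"] card_act_ge_1[of s xs]
        sb_eta_nonneg[of s xs] by simp
  qed
  then have eta_sum: "(\<Sum>s = 1..T. \<eta> s xs) \<le> 2 * Sq" using sum_eta_card_le[of xs T] by (simp add: Sq_def)
  have gamma_total: "(\<Sum>s = 1..T. \<gamma> s xs * ix_total s xs) \<le> \<Lambda> + Sq"
    using sum_gamma_ix_total_le[OF dev_all] by (simp add: Sq_def)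
  have "sb_cum K \<delta> Adv Loss xs T a \<le> ln K / \<eta> T xs + (\<Sum>s = 1..T. \<eta> s xs * (1 + ix_total s xs))"
    using sb_cum_le_hedge_bound[OF xs T a] .
  also have "(\<Sum>s = 1..T. \<eta> s xs * (1 + ix_total s xs))
      = (\<Sum>s = 1..T. \<eta> s xs) + 2 * (\<Sum>s = 1..T. \<gamma> s xs * ix_total s xs)"
    by (simp add: sb_gamma_def distrib_left sum.distrib sum_distrib_left)
  finally have hedge: "sb_cum K \<delta> Adv Loss xs T a \<le> Sq + 2 * Sq + 2 * (\<Lambda> + Sq)"
    using ln_K_div_eta_le[OF T, of xs] eta_sum gamma_total by (simp add: Sq_def)
  have error: "(\<Sum>s = 1..T. if a \<in> act Adv s xs then ix_est s xs a - lossv Loss s xs a else 0) \<le> 6 * Sq"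
    using sum_ix_error_le[OF T dev_arm \<open>\<Lambda> \<le> 2 * L\<close>] by (simp add: Sq_def)
  have "(\<Sum>s = 1..T. if a \<in> act Adv s xs then \<gamma> s xs * ix_total s xs else 0)
      \<le> (\<Sum>s = 1..T. \<gamma> s xs * ix_total s xs)"
    using sb_gamma_nonneg ix_total_nonneg by (intro sum_mono) simp
  then show ?thesis
    using regret_decomposition[of T xs a] hedge error gamma_total L_le \<open>\<Lambda> \<le> 2 * L\<close>
    by (simp add: Sq_def)
qed

lemma L_le_three_ln: "2 \<le> K \<Longrightarrow> L \<le> 3 * ln (real K / \<delta>)"
proof -
  assume "2 \<le> K"
  have "real K \<le> real K / \<delta>" using K \<delta> by (simp add: le_divide_eq)
  then have "ln 2 \<le> ln (real K / \<delta>)" using \<open>2 \<le> K\<close> \<delta> by simp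
  moreover have "ln 3 \<le> 2 * ln (2::real)"
  proof -
    have "ln (3::real) \<le> ln 4" by simp
    also have "ln (4::real) = 2 * ln 2" using ln_realpow[of 2 2] by simp
    finally show ?thesis .
  qed
  moreover have "L = ln 3 + ln (real K / \<delta>)"
    using K \<delta> ln_mult[of 3 "real K / \<delta>"] by (simp add: L_def)
  ultimately show ?thesis by linarith
qed

lemma regret_single_arm:
  assumes "K = 1" "xs \<in> set_pmf (hist T)" "a \<in> {1..K}"
  shows "regret Adv Loss T xs a = 0"
proof -
  have "xs ! (t - 1) = a" if "t \<in> {1..T}" for t
    using pulled_arm_active[OF assms(2), of t] act_subset[of t xs] assms(1,3) that by auto
  then show ?thesis unfolding regret_def by (intro sum.neutral) auto
qed

definition ix_events :: "(nat \<times> nat) option set" where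
  "ix_events = insert None (Some ` ({1..K} \<times> {1..K}))"

lemma card_ix_events: "card ix_events = 1 + K * K"
  by (simp add: ix_events_def card_image card_cartesian_product)

lemma card_ix_events_pos: "0 < card ix_events"
  by (simp add: card_ix_events)

lemma finite_ix_events: "finite ix_events"
  and in_ix_events: "None \<in> ix_events" "a \<in> {1..K} \<Longrightarrow> m \<in> {1..K} \<Longrightarrow> Some (a, m) \<in> ix_events"
  by (auto simp: ix_events_def)

lemma ln_card_ix_events_le: "ln (card ix_events / \<delta>) \<le> 2 * L"
proof -
  have "1 \<le> real K * real K" using K mult_mono[of 1 "real K" 1 "real K"] by simp
  then have "card ix_events / \<delta> \<le> 9 * (real K * real K) / \<delta>"
    using \<delta> by (intro divide_right_mono) (simp_all add: card_ix_events)
  also have "\<dots> \<le> 9 * (real K * real K) / (\<delta> * \<delta>)"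
    using \<delta> K by (intro divide_left_mono) (simp_all add: mult_le_cancel_left1)
  also have "\<dots> = (3 * real K / \<delta>) ^ 2" by (simp add: power2_eq_square)
  finally have "ln (card ix_events / \<delta>) \<le> ln ((3 * real K / \<delta>) ^ 2)"
    using \<delta> K card_ix_events_pos by (subst ln_le_cancel_iff) auto
  also have "\<dots> = 2 * L" using K \<delta> by (simp add: L_def ln_realpow)
  finally show ?thesis .
qed

lemma prob_ix_dev_large:
  "measure_pmf.prob (hist T)
     {xs. \<exists>e\<in>ix_events. ln (card ix_events / \<delta>) \<le> (\<Sum>s = 1..T. ix_dev (ix_weight T e) s xs)} \<le> \<delta>"
proof -
  have "measure_pmf.prob (hist T)
      (\<Union>e\<in>ix_events. {xs. ln (card ix_events / \<delta>) \<le> (\<Sum>s = 1..T. ix_dev (ix_weight T e) s xs)})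
      \<le> (\<Sum>e\<in>ix_events. \<delta> / card ix_events)"
    using \<delta> card_ix_events_pos finite_ix_events predictable_ix_weight ix_weight_bounds
    by (intro measure_pmf.finite_measure_subadditive_finite[THEN order_trans] sum_mono
        prob_ix_dev_ge[THEN order_trans]) auto
  also have "\<dots> = \<delta>" using card_ix_events_pos by simp
  finally show ?thesis by (simp add: UNION_eq)
qed

lemma regret_le_unless_ix_dev_large:
  assumes xs: "xs \<in> set_pmf (hist T)" and a: "a \<in> {1..K}"
    and small: "\<And>e. e \<in> ix_events \<Longrightarrow> (\<Sum>s = 1..T. ix_dev (ix_weight T e) s xs) < ln (card ix_events / \<delta>)"
  shows "regret Adv Loss T xs a \<le> 36 * sqrt (ln (real K / \<delta>) * load T xs)"
proof (cases "K = 1")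
  case True
  have "0 \<le> ln (real K / \<delta>) * load T xs" using K \<delta> load_ge[of T xs] by simp
  then show ?thesis using regret_single_arm[OF True xs a] by simp
next
  case False
  have "regret Adv Loss T xs a \<le> 18 * sqrt (L * load T xs)"
    using xs a ln_card_ix_events_le in_ix_events small
    by (intro regret_le_on_good_event[where \<Lambda> = "ln (card ix_events / \<delta>)"]) (auto intro: less_imp_le)
  also have "\<dots> \<le> 18 * sqrt (4 * ln (real K / \<delta>) * load T xs)"
  proof -
    have "0 \<le> ln (real K / \<delta>)" using K \<delta> by simp
    then have "L \<le> 4 * ln (real K / \<delta>)" using L_le_three_ln K False by simp
    then show ?thesis using load_ge[of T xs] by (simp add: mult_right_mono)
  qed
  also have "\<dots> = 36 * sqrt (ln (real K / \<delta>) * load T xs)" by (simp add: real_sqrt_mult)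
  finally show ?thesis .
qed

theorem prob_regret_le:
  "1 - \<delta> \<le> measure_pmf.prob (hist T)
     {xs. \<forall>a\<in>{1..K}. regret Adv Loss T xs a \<le> 36 * sqrt (ln (real K / \<delta>) * load T xs)}"
proof -
  define Bad where "Bad = {xs. \<exists>e\<in>ix_events.
      ln (card ix_events / \<delta>) \<le> (\<Sum>s = 1..T. ix_dev (ix_weight T e) s xs)}"
  have "1 - \<delta> \<le> 1 - measure_pmf.prob (hist T) Bad"
    using prob_ix_dev_large[of T] by (simp add: Bad_def)
  also have "\<dots> = measure_pmf.prob (hist T) ((UNIV - Bad) \<inter> set_pmf (hist T))"
    using measure_pmf.prob_compl[of Bad "hist T"] by (simp add: measure_Int_set_pmf)
  also have "\<dots> \<le> measure_pmf.prob (hist T)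
      {xs. \<forall>a\<in>{1..K}. regret Adv Loss T xs a \<le> 36 * sqrt (ln (real K / \<delta>) * load T xs)}"
    using regret_le_unless_ix_dev_large
    by (intro measure_pmf.finite_measure_mono) (auto simp: Bad_def not_le)
  finally show ?thesis .
qed

end

theorem theorem3p2:
  shows "\<exists>C :: real. \<forall>(K :: nat) (\<delta> :: real) Adv Loss (T :: nat).
     K \<ge> 1 \<longrightarrow> 0 < \<delta> \<longrightarrow> \<delta> < 1 \<longrightarrow>
     (\<forall>t hs. Adv t hs \<noteq> {} \<and> Adv t hs \<subseteq> {1..K}) \<longrightarrow>
     (\<forall>t hs i. 0 \<le> Loss t hs i \<and> Loss t hs i \<le> 1) \<longrightarrow>
     measure_pmf.prob (sb_hist K \<delta> Adv Loss T)
       {xs. \<forall>a\<in>{1..K}. regret Adv Loss T xs a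
              \<le> C * sqrt (ln (real K / \<delta>) * (\<Sum>t = 1..T. real (card (act Adv t xs))))}
       \<ge> 1 - \<delta>"
proof (intro exI[of _ 36] allI impI)
  fix K :: nat and \<delta> :: real and Adv :: "nat \<Rightarrow> nat list \<Rightarrow> nat set"
    and Loss :: "nat \<Rightarrow> nat list \<Rightarrow> nat \<Rightarrow> real" and T :: nat
  assume "K \<ge> 1" "0 < \<delta>" "\<delta> < 1" "\<forall>t hs. Adv t hs \<noteq> {} \<and> Adv t hs \<subseteq> {1..K}"
    "\<forall>t hs i. 0 \<le> Loss t hs i \<and> Loss t hs i \<le> 1"
  then interpret sleeping_bandit K \<delta> Adv Loss by unfold_locales auto
  show "measure_pmf.prob (sb_hist K \<delta> Adv Loss T)
       {xs. \<forall>a\<in>{1..K}. regret Adv Loss T xs a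
              \<le> 36 * sqrt (ln (real K / \<delta>) * (\<Sum>t = 1..T. real (card (act Adv t xs))))}
       \<ge> 1 - \<delta>"
    using prob_regret_le[of T] by (simp add: load_def)
qed

end
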